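(* For $\Re(s)\ge0$ and $(u,v)\in\mathbb{D}\times\mathbb{D}$, the function $F=F(s;\cdot,\cdot)$ satisfies the linear partial differential equation $$uP(u)\frac{\partial F}{\partial u}(u,v)+v\left[\rho(1-q)-(s+1+\rho-v)(u-q)\right]\frac{\partial F}{\partial v}(u,v)+\left[u(u-s-1-\rho)+(u-q)(u+v)\right]F(u,v)+L(u,v)=0,$$ where $P(u)=u^2-(s+1+\rho+q)u+sq+\rho+q$ and $$L(u,v)=\frac{v}{1-u}+(u+v)E(q,v)-v(s+1+\rho-v)\frac{\partial E}{\partial v}(q,v).$$
   Context: Queueing model: an $M^{[X]}/M/1$ processor-sharing queue. Batches arrive according to a Poisson process with rate $\rho>0$; each job requires an exponential service with mean $1$; the unit server capacity is shared equally among all jobs present; interarrival times, batch sizes and service requirements are independent. Batch sizes are geometric: $\mathbb{P}(B=b)=(1-q)q^{b-1}$, $b\ge1$, with $q\in(0,1)$, $\rho+q<1$. For $n\ge0,b\ge1$, $\Omega_{n,b}$ is the sojourn time of a tagged batch (from arrival to departure of its last job) given $n$ jobs present at its arrival and batch size $b$; $e^*_{n,b}(s)=\mathbb{E}(e^{-s\Omega_{n,b}})$. $\mathbb{D}$ is the open unit disk. $E(u,v)=E(s;u,v)=\sum_{n\ge0}\sum_{b\ge1}e^*_{n,b}(s)u^nv^b$ on $\mathbb{D}^2$, and $F(u,v)=\frac{E(u,v)-E(q,v)}{u-q}$ for $u\ne q$, $F(q,v)=\frac{\partial E}{\partial u}(q,v)$ (the dependence on $s$ is suppressed). *)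

theory Defs
  imports "HOL-Analysis.Analysis"
begin

text \<open>Embedded jump chain of the M^[X]/M/1-PS queue seen by a tagged batch.
  State (m,k): m = number of non-tagged jobs, k = number of remaining tagged jobs.
  While k \<ge> 1 the total event rate is rho+1 (arrival rate rho, unit service
  capacity shared equally by the m+k jobs), so holding times are iid Exp(rho+1).
  An arrival brings a geometric batch: b+1 jobs with probability (1-q) q^b.
  absorb_prob rho q j m k = probability, starting from (m,k), that the last
  tagged job leaves exactly at the j-th jump.\<close>

fun absorb_prob :: "real \<Rightarrow> real \<Rightarrow> nat \<Rightarrow> nat \<Rightarrow> nat \<Rightarrow> real" where
  "absorb_prob \<rho> q 0 m k = (if k = 0 then 1 else 0)"
| "absorb_prob \<rho> q (Suc j) m k =
     (if k = 0 then 0 else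
        \<rho> / (\<rho> + 1) * (\<Sum>b. (1 - q) * q ^ b * absorb_prob \<rho> q j (m + b + 1) k)
      + 1 / (\<rho> + 1) * (real k / real (m + k)) * absorb_prob \<rho> q j m (k - 1)
      + 1 / (\<rho> + 1) * (real m / real (m + k)) * absorb_prob \<rho> q j (m - 1) k)"

text \<open>Laplace transform of the sojourn time Omega_{n,b}: the sojourn time is the sum of
  J iid Exp(rho+1) holding times, J the absorption step, so
  E exp(-s Omega) = \<Sum>_j P(J=j) ((rho+1)/(rho+1+s))^j.\<close>

definition e_star :: "real \<Rightarrow> real \<Rightarrow> complex \<Rightarrow> nat \<Rightarrow> nat \<Rightarrow> complex" where
  "e_star \<rho> q s n b =
     (\<Sum>j. complex_of_real (absorb_prob \<rho> q j n b) * ((of_real \<rho> + 1) / (of_real \<rho> + 1 + s)) ^ j)"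

definition genE :: "real \<Rightarrow> real \<Rightarrow> complex \<Rightarrow> complex \<Rightarrow> complex \<Rightarrow> complex" where
  "genE \<rho> q s u v = (\<Sum>n. \<Sum>b. e_star \<rho> q s n (Suc b) * u ^ n * v ^ (Suc b))"

definition genF :: "real \<Rightarrow> real \<Rightarrow> complex \<Rightarrow> complex \<Rightarrow> complex \<Rightarrow> complex" where
  "genF \<rho> q s u v =
     (if u = of_real q then deriv (\<lambda>w. genE \<rho> q s w v) (of_real q)
      else (genE \<rho> q s u v - genE \<rho> q s (of_real q) v) / (u - of_real q))"

end

theory Submission
  imports Defs
begin

text \<open>Conditioning on the first jump of the embedded chain gives, for \<open>b \<ge> 1\<close>,
  \<open>(\<rho> + 1 + s) (n + b) e(n,b) = \<rho> (n + b) \<Sum>c (1 - q) q^c e(n+c+1,b) + b e(n,b-1) + n e(n-1,b)\<close>,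
  and \<open>e(n,0) = 1\<close>. The batch sum \<open>\<Sum>c q^c e(n+c+1,b)\<close> is exactly the coefficient of
  \<open>u^n v^b\<close> in \<open>F\<close>, so multiplying by \<open>u^n v^b\<close> and summing turns the recursion into
  \<open>(\<rho> + 1 + s) (u E_u + v E_v) = \<rho> (1 - q) (u F_u + v F_v) + v/(1 - u) + v (v E_v + E) + u (u E_u + E)\<close>.
  All coefficients are bounded, so every series involved converges absolutely on the bidisk and
  may be rearranged and differentiated termwise. Substituting \<open>E(u,v) = E(q,v) + (u - q) F(u,v)\<close>
  turns this equation for \<open>E\<close> into the stated one for \<open>F\<close>.\<close>

section \<open>Rearranging absolutely convergent double series\<close>

lemma infsum_UNIV_eq_suminf:
  fixes f :: "nat \<Rightarrow> 'a::banach"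
  assumes "f summable_on UNIV"
  shows "infsum f UNIV = suminf f"
  using assms by (metis has_sum_imp_sums has_sum_infsum sums_unique)

lemma suminf_swap_norm_summable:
  fixes c :: "nat \<Rightarrow> nat \<Rightarrow> 'a::banach"
  assumes inner: "\<And>n. summable (\<lambda>b. norm (c n b))"
    and outer: "summable (\<lambda>n. \<Sum>b. norm (c n b))"
  shows "summable (\<lambda>b. \<Sum>n. c n b)" and "(\<Sum>n. \<Sum>b. c n b) = (\<Sum>b. \<Sum>n. c n b)"
proof -
  have row: "(\<lambda>b. c n b) summable_on UNIV" for n
    using norm_summable_imp_summable_on[OF inner] .
  have norm_row: "(\<lambda>b. norm (c n b)) summable_on UNIV" for n
    using norm_summable_imp_summable_on[of "\<lambda>b. norm (c n b)"] inner by simp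
  have "(\<lambda>x. norm ((\<lambda>(n, b). c n b) x)) summable_on UNIV \<times> UNIV"
  proof (rule iffD2[OF Infinite_Sum.abs_summable_on_Sigma_iff], intro conjI ballI)
    show "(\<lambda>b. norm (case (n, b) of (n, b) \<Rightarrow> c n b)) summable_on UNIV" for n
      using norm_row by simp
    have "(\<lambda>n. norm (\<Sum>b. norm (c n b))) summable_on UNIV"
      using norm_summable_imp_summable_on[of "\<lambda>n. norm (\<Sum>b. norm (c n b))"] outer
      by (simp add: suminf_nonneg inner)
    then show "(\<lambda>n. norm (\<Sum>\<^sub>\<infinity>b\<in>UNIV. norm (case (n, b) of (n, b) \<Rightarrow> c n b))) summable_on UNIV"
      using infsum_UNIV_eq_suminf[OF norm_row] by (simp del: real_norm_def)
  qed
  then have double: "(\<lambda>(n, b). c n b) summable_on UNIV \<times> UNIV"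
    by (rule abs_summable_summable)
  have column: "(\<lambda>n. c n b) summable_on UNIV" for b
  proof (rule norm_summable_imp_summable_on, rule summable_comparison_test'[OF outer])
    fix n
    show "norm (norm (c n b)) \<le> (\<Sum>b. norm (c n b))"
      using sum_le_suminf[OF inner, of "{b}"] by simp
  qed
  have double': "(\<lambda>(b, n). c n b) summable_on UNIV \<times> UNIV"
    using double summable_on_swap[of "\<lambda>(n, b). c n b" UNIV UNIV] by simp
  have rows: "(\<lambda>n. \<Sum>\<^sub>\<infinity>b. c n b) summable_on UNIV"
    using summable_on_Sigma_banach[of "\<lambda>n b. c n b" UNIV "\<lambda>_. UNIV"] double by simp
  have columns: "(\<lambda>b. \<Sum>\<^sub>\<infinity>n. c n b) summable_on UNIV"
    using summable_on_Sigma_banach[of "\<lambda>b n. c n b" UNIV "\<lambda>_. UNIV"] double' by simp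
  then show "summable (\<lambda>b. \<Sum>n. c n b)"
    using summable_on_imp_summable infsum_UNIV_eq_suminf[OF column] by simp
  have "(\<Sum>\<^sub>\<infinity>n. \<Sum>\<^sub>\<infinity>b. c n b) = (\<Sum>\<^sub>\<infinity>b. \<Sum>\<^sub>\<infinity>n. c n b)"
    using infsum_swap_banach[of "\<lambda>n b. c n b" UNIV UNIV] double by simp
  then show "(\<Sum>n. \<Sum>b. c n b) = (\<Sum>b. \<Sum>n. c n b)"
    using infsum_UNIV_eq_suminf[OF row] infsum_UNIV_eq_suminf[OF rows]
      infsum_UNIV_eq_suminf[OF column] infsum_UNIV_eq_suminf[OF columns] by simp
qed

section \<open>Double power series on the unit bidisk\<close>

definition dps :: "(nat \<Rightarrow> nat \<Rightarrow> complex) \<Rightarrow> complex \<Rightarrow> complex \<Rightarrow> complex" where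
  "dps c u v = (\<Sum>n. \<Sum>b. c n b * u ^ n * v ^ b)"

text \<open>Subexponential growth of the coefficients makes the double power series converge absolutely
  on the open unit bidisk and, unlike boundedness, survives termwise differentiation.\<close>

definition subexp :: "(nat \<Rightarrow> nat \<Rightarrow> complex) \<Rightarrow> bool" where
  "subexp c \<longleftrightarrow> (\<forall>r::real. 0 < r \<and> r < 1 \<longrightarrow> (\<exists>M. \<forall>n b. norm (c n b) * r ^ n * r ^ b \<le> M))"

definition du :: "(nat \<Rightarrow> nat \<Rightarrow> complex) \<Rightarrow> nat \<Rightarrow> nat \<Rightarrow> complex" where
  "du c = (\<lambda>n b. of_nat (Suc n) * c (Suc n) b)"

definition dv :: "(nat \<Rightarrow> nat \<Rightarrow> complex) \<Rightarrow> nat \<Rightarrow> nat \<Rightarrow> complex" where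
  "dv c = (\<lambda>n b. of_nat (Suc b) * c n (Suc b))"

lemma subexpE:
  assumes "subexp c" "0 < r" "r < 1"
  obtains M where "0 \<le> M" "\<And>n b. norm (c n b) * r ^ n * r ^ b \<le> M"
proof -
  obtain M where M: "\<And>n b. norm (c n b) * r ^ n * r ^ b \<le> M"
    using assms unfolding subexp_def by blast
  moreover have "0 \<le> M"
    using M[of 0 0] by (metis mult.right_neutral norm_ge_zero order_trans power_0)
  ultimately show ?thesis using that by blast
qed

lemma subexp_bounded: "(\<And>n b. norm (c n b) \<le> B) \<Longrightarrow> subexp c"
  unfolding subexp_def
proof (intro allI impI exI[of _ B])
  fix r :: real and n b
  assume "\<And>n b. norm (c n b) \<le> B" "0 < r \<and> r < 1"
  moreover have "norm (c n b) * (r ^ n * r ^ b) \<le> norm (c n b)"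
    using \<open>0 < r \<and> r < 1\<close> by (intro mult_left_le) (simp_all add: mult_le_one power_le_one)
  ultimately show "norm (c n b) * r ^ n * r ^ b \<le> B"
    by (simp only: mult.assoc) (meson order_trans)
qed

lemma subexp_transpose: "subexp c \<Longrightarrow> subexp (\<lambda>n b. c b n)"
  unfolding subexp_def by (metis mult.assoc mult.commute)

lemma subexp_add:
  assumes c: "subexp c" and d: "subexp d"
  shows "subexp (\<lambda>n b. c n b + d n b)"
  unfolding subexp_def
proof (intro allI impI)
  fix r :: real
  assume r: "0 < r \<and> r < 1"
  obtain M1 where M1: "\<And>n b. norm (c n b) * r ^ n * r ^ b \<le> M1"
    using subexpE[OF c] r by blast
  obtain M2 where M2: "\<And>n b. norm (d n b) * r ^ n * r ^ b \<le> M2"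
    using subexpE[OF d] r by blast
  have "norm (c n b + d n b) * r ^ n * r ^ b \<le> M1 + M2" for n b
  proof -
    have "norm (c n b + d n b) * r ^ n * r ^ b \<le> (norm (c n b) + norm (d n b)) * r ^ n * r ^ b"
      using r by (intro mult_right_mono norm_triangle_ineq) auto
    also have "\<dots> \<le> M1 + M2"
      using M1[of n b] M2[of n b] by (simp add: algebra_simps)
    finally show ?thesis .
  qed
  then show "\<exists>M. \<forall>n b. norm (c n b + d n b) * r ^ n * r ^ b \<le> M" by blast
qed

lemma subexp_cmult:
  assumes c: "subexp c"
  shows "subexp (\<lambda>n b. k * c n b)"
  unfolding subexp_def
proof (intro allI impI)
  fix r :: real
  assume r: "0 < r \<and> r < 1"
  obtain M where M: "\<And>n b. norm (c n b) * r ^ n * r ^ b \<le> M"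
    using subexpE[OF c] r by blast
  have "norm (k * c n b) * r ^ n * r ^ b \<le> norm k * M" for n b
    using mult_left_mono[OF M[of n b], of "norm k"] by (simp add: norm_mult algebra_simps)
  then show "\<exists>M. \<forall>n b. norm (k * c n b) * r ^ n * r ^ b \<le> M" by blast
qed

lemma subexp_shift_u:
  assumes c: "subexp c"
  shows "subexp (\<lambda>n b. if n = 0 then 0 else c (n - 1) b)"
  unfolding subexp_def
proof (intro allI impI)
  fix r :: real
  assume r: "0 < r \<and> r < 1"
  obtain M where M0: "0 \<le> M" and M: "\<And>n b. norm (c n b) * r ^ n * r ^ b \<le> M"
    using subexpE[OF c] r by blast
  have "norm (if n = 0 then 0 else c (n - 1) b) * r ^ n * r ^ b \<le> M" for n b
  proof (cases n)
    case (Suc m)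
    have "norm (c m b) * r ^ Suc m * r ^ b = r * (norm (c m b) * r ^ m * r ^ b)"
      by (simp add: algebra_simps)
    also have "\<dots> \<le> 1 * M"
      using M[of m b] r M0 by (intro mult_mono) (auto intro!: mult_nonneg_nonneg)
    finally show ?thesis using Suc by simp
  qed (use M0 in simp)
  then show "\<exists>M. \<forall>n b. norm (if n = 0 then 0 else c (n - 1) b) * r ^ n * r ^ b \<le> M" by blast
qed

lemma subexp_Suc_u:
  assumes c: "subexp c"
  shows "subexp (\<lambda>n b. c (Suc n) b)"
  unfolding subexp_def
proof (intro allI impI)
  fix r :: real
  assume r: "0 < r \<and> r < 1"
  obtain M where M: "\<And>n b. norm (c n b) * r ^ n * r ^ b \<le> M"
    using subexpE[OF c] r by blast
  have "norm (c (Suc n) b) * r ^ n * r ^ b \<le> M / r" for n b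
    using M[of "Suc n" b] r by (simp add: field_simps)
  then show "\<exists>M. \<forall>n b. norm (c (Suc n) b) * r ^ n * r ^ b \<le> M" by blast
qed

lemma bounded_nat_mult_power:
  fixes x :: real
  assumes "0 \<le> x" "x < 1"
  obtains K where "\<And>n. real n * x ^ n \<le> K"
proof -
  have "(\<lambda>n. of_nat n * x ^ n) \<longlonglongrightarrow> 0"
    using assms by (intro powser_times_n_limit_0) simp
  then have "Bseq (\<lambda>n. of_nat n * x ^ n)"
    by (intro convergent_imp_Bseq convergentI)
  then obtain K where K: "\<forall>n. norm (of_nat n * x ^ n :: real) \<le> K"
    using BseqD by blast
  have "real n * x ^ n \<le> K" for n
    using K[rule_format, of n] abs_ge_self[of "real n * x ^ n"] unfolding real_norm_def by linarith
  then show ?thesis using that by blast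
qed

lemma subexp_mult_n:
  assumes c: "subexp c"
  shows "subexp (\<lambda>n b. of_nat n * c n b)"
  unfolding subexp_def
proof (intro allI impI)
  fix r :: real
  assume r: "0 < r \<and> r < 1"
  define r' where "r' = (1 + r) / 2"
  have r': "0 < r'" "r' < 1" "r < r'" using r by (auto simp: r'_def)
  obtain M where M0: "0 \<le> M" and M: "\<And>n b. norm (c n b) * r' ^ n * r' ^ b \<le> M"
    using subexpE[OF c r'(1,2)] by blast
  define x where "x = r / r'"
  have x: "0 \<le> x" "x < 1" using r r' by (auto simp: x_def field_simps)
  obtain K where K: "\<And>n. real n * x ^ n \<le> K"
    using bounded_nat_mult_power[OF x] by blast
  have "norm (of_nat n * c n b) * r ^ n * r ^ b \<le> K * M" for n b
  proof -
    have "norm (of_nat n * c n b) * r ^ n * r ^ b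
        = (real n * x ^ n) * (norm (c n b) * r' ^ n * r' ^ b) * x ^ b"
      using r' by (simp add: norm_mult x_def power_divide field_simps)
    also have "\<dots> \<le> K * M * 1"
      using K[of n] M[of n b] x M0 K[of 0] r'
      by (intro mult_mono) (auto simp: power_le_one)
    finally show ?thesis by simp
  qed
  then show "\<exists>M. \<forall>n b. norm (of_nat n * c n b) * r ^ n * r ^ b \<le> M" by blast
qed

lemma subexp_mult_b:
  assumes "subexp c"
  shows "subexp (\<lambda>n b. of_nat b * c n b)"
proof -
  have "subexp (\<lambda>n b. of_nat n * c b n)"
    by (rule subexp_mult_n[OF subexp_transpose[OF assms]])
  from subexp_transpose[OF this] show ?thesis by simp
qed

lemma subexp_shift_v:
  assumes "subexp c"
  shows "subexp (\<lambda>n b. if b = 0 then 0 else c n (b - 1))"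
proof -
  have "subexp (\<lambda>n b. if n = 0 then 0 else c b (n - 1))"
    by (rule subexp_shift_u[OF subexp_transpose[OF assms]])
  from subexp_transpose[OF this] show ?thesis by simp
qed

lemma subexp_du: "subexp c \<Longrightarrow> subexp (du c)"
  unfolding du_def using subexp_Suc_u[OF subexp_mult_n] by simp

lemma subexp_dv:
  assumes "subexp c"
  shows "subexp (dv c)"
proof -
  have "subexp (du (\<lambda>n b. c b n))"
    by (rule subexp_du[OF subexp_transpose[OF assms]])
  from subexp_transpose[OF this] show ?thesis by (simp add: du_def dv_def)
qed

lemma subexp_euler: "subexp c \<Longrightarrow> subexp (\<lambda>n b. of_nat (n + b) * c n b)"
  using subexp_add[OF subexp_mult_n subexp_mult_b] by (simp add: distrib_right)

lemma dps_norm_summable: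
  assumes "subexp c" "norm u < 1" "norm v < 1"
  shows "summable (\<lambda>b. norm (c n b * u ^ n * v ^ b))"
    and "summable (\<lambda>n. \<Sum>b. norm (c n b * u ^ n * v ^ b))"
proof -
  define r where "r = (max (norm u) (norm v) + 1) / 2"
  have r: "norm u < r" "norm v < r" "r < 1"
    using assms(2,3) by (auto simp: r_def)
  then have "0 < r"
    using norm_ge_zero[of u] by linarith
  then obtain M where M: "\<And>n b. norm (c n b) * r ^ n * r ^ b \<le> M"
    using subexpE[OF assms(1) _ r(3)] by blast
  define x where "x = norm u / r"
  define y where "y = norm v / r"
  have x: "0 \<le> x" "x < 1" and y: "0 \<le> y" "y < 1"
    using r \<open>0 < r\<close> by (auto simp: x_def y_def field_simps)
  have bound: "norm (c n b * u ^ n * v ^ b) \<le> M * x ^ n * y ^ b" for n b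
  proof -
    have "norm (c n b * u ^ n * v ^ b) = (norm (c n b) * r ^ n * r ^ b) * x ^ n * y ^ b"
      using \<open>0 < r\<close> by (simp add: norm_mult norm_power x_def y_def power_divide)
    also have "\<dots> \<le> M * x ^ n * y ^ b"
      using M[of n b] x y by (intro mult_right_mono) auto
    finally show ?thesis .
  qed
  have geo_y: "summable (\<lambda>b. M * x ^ n * y ^ b)" for n
    using y by (intro summable_mult summable_geometric) simp
  show row: "summable (\<lambda>b. norm (c n b * u ^ n * v ^ b))" for n
    by (rule summable_comparison_test'[OF geo_y]) (use bound in simp)
  have "(\<Sum>b. norm (c n b * u ^ n * v ^ b)) \<le> (\<Sum>b. M * x ^ n * y ^ b)" for n
    by (rule suminf_le[OF bound row geo_y])
  also have "(\<Sum>b. M * x ^ n * y ^ b) = M / (1 - y) * x ^ n" for n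
    using suminf_mult[OF summable_geometric[of y], of "M * x ^ n"] y
    by (simp add: suminf_geometric)
  finally have "norm (\<Sum>b. norm (c n b * u ^ n * v ^ b)) \<le> M / (1 - y) * x ^ n" for n
    by (simp add: suminf_nonneg row)
  moreover have "summable (\<lambda>n. M / (1 - y) * x ^ n)"
    using x by (intro summable_mult summable_geometric) simp
  ultimately show "summable (\<lambda>n. \<Sum>b. norm (c n b * u ^ n * v ^ b))"
    by (rule summable_comparison_test'[rotated])
qed

lemma dps_summable:
  assumes "subexp c" "norm u < 1" "norm v < 1"
  shows "summable (\<lambda>b. c n b * u ^ n * v ^ b)"
    and "summable (\<lambda>n. \<Sum>b. c n b * u ^ n * v ^ b)"
proof -
  note norm_summable = dps_norm_summable[OF assms]
  show "summable (\<lambda>b. c n b * u ^ n * v ^ b)" for n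
    by (rule summable_norm_cancel[OF norm_summable(1)])
  show "summable (\<lambda>n. \<Sum>b. c n b * u ^ n * v ^ b)"
    by (rule summable_comparison_test'[OF norm_summable(2)]) (rule summable_norm[OF norm_summable(1)])
qed

lemma dps_row_summable:
  assumes "subexp c" "norm v < 1"
  shows "summable (\<lambda>b. c n b * v ^ b)"
proof -
  have "summable (\<lambda>b. 2 ^ n * (c n b * (1/2) ^ n * v ^ b))"
    using dps_summable(1)[OF assms(1) _ assms(2), of "1/2"] by (intro summable_mult) simp
  then show ?thesis by (simp add: power_one_over)
qed

lemma dps_add:
  assumes "subexp c" "subexp d" "norm u < 1" "norm v < 1"
  shows "dps (\<lambda>n b. c n b + d n b) u v = dps c u v + dps d u v"
proof -
  note c = dps_summable[OF assms(1,3,4)] and d = dps_summable[OF assms(2,3,4)]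
  have "(\<Sum>b. (c n b + d n b) * u ^ n * v ^ b)
      = (\<Sum>b. c n b * u ^ n * v ^ b) + (\<Sum>b. d n b * u ^ n * v ^ b)" for n
    using suminf_add[OF c(1) d(1)] by (simp add: algebra_simps)
  then show ?thesis unfolding dps_def using suminf_add[OF c(2) d(2)] by simp
qed

lemma dps_diff:
  assumes "subexp c" "subexp d" "norm u < 1" "norm v < 1"
  shows "dps (\<lambda>n b. c n b - d n b) u v = dps c u v - dps d u v"
proof -
  note c = dps_summable[OF assms(1,3,4)] and d = dps_summable[OF assms(2,3,4)]
  have "(\<Sum>b. (c n b - d n b) * u ^ n * v ^ b)
      = (\<Sum>b. c n b * u ^ n * v ^ b) - (\<Sum>b. d n b * u ^ n * v ^ b)" for n
    using suminf_diff[OF c(1) d(1)] by (simp add: algebra_simps)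
  then show ?thesis unfolding dps_def using suminf_diff[OF c(2) d(2)] by simp
qed

lemma dps_cmult:
  assumes "subexp c" "norm u < 1" "norm v < 1"
  shows "dps (\<lambda>n b. k * c n b) u v = k * dps c u v"
proof -
  note c = dps_summable[OF assms]
  have "(\<Sum>b. k * c n b * u ^ n * v ^ b) = k * (\<Sum>b. c n b * u ^ n * v ^ b)" for n
    using suminf_mult[OF c(1), of k] by (simp add: algebra_simps)
  then show ?thesis unfolding dps_def using suminf_mult[OF c(2), of k] by simp
qed

lemma dps_transpose:
  assumes "subexp c" "norm u < 1" "norm v < 1"
  shows "dps c u v = dps (\<lambda>n b. c b n) v u"
  unfolding dps_def
  using suminf_swap_norm_summable(2)[of "\<lambda>n b. c n b * u ^ n * v ^ b", OF dps_norm_summable[OF assms]]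
  by (simp add: algebra_simps)

lemma dps_row0:
  "dps (\<lambda>n b. if n = 0 then g b else 0) u v = (\<Sum>b. g b * v ^ b)"
proof -
  have "(\<Sum>b. (if n = 0 then g b else 0) * u ^ n * v ^ b)
      = (if n = 0 then (\<lambda>_. \<Sum>b. g b * v ^ b) n else 0)" for n
    by simp
  then show ?thesis
    unfolding dps_def using sums_single[of 0 "\<lambda>_. \<Sum>b. g b * v ^ b"] by (simp add: sums_iff)
qed

lemma dps_shift_u:
  assumes "subexp c" "norm u < 1" "norm v < 1"
  shows "dps (\<lambda>n b. if n = 0 then 0 else c (n - 1) b) u v = u * dps c u v"
proof -
  note summable = dps_summable[OF assms]
  define h where "h n = (\<Sum>b. (if n = 0 then 0 else c (n - 1) b) * u ^ n * v ^ b)" for n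
  have "h (Suc n) = u * (\<Sum>b. c n b * u ^ n * v ^ b)" for n
    unfolding h_def using suminf_mult[OF summable(1)[of n], of u] by (simp add: algebra_simps)
  then have "(\<lambda>n. h (Suc n)) sums (u * dps c u v)"
    unfolding dps_def by (simp add: sums_mult summable(2) summable_sums)
  then have "h sums (u * dps c u v)"
    using sums_Suc_iff[of h] by (simp add: h_def)
  then show ?thesis unfolding dps_def h_def by (simp add: sums_iff)
qed

lemma dps_shift_v:
  assumes "subexp c" "norm u < 1" "norm v < 1"
  shows "dps (\<lambda>n b. if b = 0 then 0 else c n (b - 1)) u v = v * dps c u v"
proof -
  have c': "subexp (\<lambda>n b. c b n)" by (rule subexp_transpose[OF assms(1)])
  have "dps (\<lambda>n b. if b = 0 then 0 else c n (b - 1)) u v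
      = dps (\<lambda>n b. if n = 0 then 0 else c b (n - 1)) v u"
    using dps_transpose[OF subexp_shift_v[OF assms(1)] assms(2,3)] by simp
  also have "\<dots> = v * dps (\<lambda>n b. c b n) v u"
    by (rule dps_shift_u[OF c' assms(3,2)])
  also have "\<dots> = v * dps c u v"
    using dps_transpose[OF assms] by simp
  finally show ?thesis .
qed

lemma dps_has_field_derivative_u:
  assumes "subexp c" "norm u < 1" "norm v < 1"
  shows "((\<lambda>w. dps c w v) has_field_derivative dps (du c) u v) (at u)"
proof -
  define a where "a n = (\<Sum>b. c n b * v ^ b)" for n
  have row: "(\<Sum>b. c n b * w ^ n * v ^ b) = a n * w ^ n" for n w
    unfolding a_def using suminf_mult2[OF dps_row_summable[OF assms(1,3)], of n "w ^ n"]
    by (simp add: algebra_simps)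
  define K where "K = complex_of_real ((norm u + 1) / 2)"
  have K: "norm K < 1" "norm u < norm K"
    using assms(2) by (auto simp: K_def)
  have "summable (\<lambda>n. a n * K ^ n)"
    using dps_summable(2)[OF assms(1) K(1) assms(3)] unfolding row .
  from termdiffs_strong[OF this K(2)]
  have "((\<lambda>w. \<Sum>n. a n * w ^ n) has_field_derivative (\<Sum>n. diffs a n * u ^ n)) (at u)" .
  moreover have "diffs a n * u ^ n = (\<Sum>b. du c n b * u ^ n * v ^ b)" for n
    using suminf_mult[OF dps_row_summable[OF assms(1,3)], of "of_nat (Suc n) * u ^ n"]
    by (simp add: diffs_def a_def du_def algebra_simps)
  ultimately show ?thesis
    unfolding dps_def row by simp
qed

lemma dps_has_field_derivative_v:
  assumes "subexp c" "norm u < 1" "norm v < 1"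
  shows "((\<lambda>w. dps c u w) has_field_derivative dps (dv c) u v) (at v)"
proof -
  have c': "subexp (\<lambda>n b. c b n)" by (rule subexp_transpose[OF assms(1)])
  have "dps (du (\<lambda>n b. c b n)) v u = dps (dv c) u v"
    using dps_transpose[OF subexp_du[OF c'] assms(3,2)] by (simp add: du_def dv_def)
  then have "((\<lambda>w. dps (\<lambda>n b. c b n) w u) has_field_derivative dps (dv c) u v) (at v)"
    using dps_has_field_derivative_u[OF c' assms(3,2)] by simp
  then show ?thesis
  proof (rule has_field_derivative_transform_within_open[OF _ open_ball])
    show "v \<in> ball 0 1" using assms(3) by simp
    show "dps (\<lambda>n b. c b n) w u = dps c u w" if "w \<in> ball 0 1" for w
      using dps_transpose[OF assms(1,2), of w] that by simp
  qed
qed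

lemma deriv_eq_on_unit_ball:
  fixes f g :: "complex \<Rightarrow> complex"
  assumes "(f has_field_derivative D) (at x)" "norm x < 1" "\<And>w. norm w < 1 \<Longrightarrow> g w = f w"
  shows "deriv g x = D"
proof (rule DERIV_imp_deriv, rule has_field_derivative_transform_within_open[OF assms(1) open_ball])
  show "x \<in> ball 0 1" using assms(2) by simp
  show "f w = g w" if "w \<in> ball 0 1" for w
    using assms(3) that by simp
qed

lemma dps_mult_n:
  assumes "subexp c" "norm u < 1" "norm v < 1"
  shows "dps (\<lambda>n b. of_nat n * c n b) u v = u * dps (du c) u v"
proof -
  have "(\<lambda>n b. of_nat n * c n b) = (\<lambda>n b. if n = 0 then 0 else du c (n - 1) b)"
    by (intro ext) (simp add: du_def split: nat.split)
  then show ?thesis using dps_shift_u[OF subexp_du[OF assms(1)] assms(2,3)] by simp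
qed

lemma dps_mult_b:
  assumes "subexp c" "norm u < 1" "norm v < 1"
  shows "dps (\<lambda>n b. of_nat b * c n b) u v = v * dps (dv c) u v"
proof -
  have "(\<lambda>n b. of_nat b * c n b) = (\<lambda>n b. if b = 0 then 0 else dv c n (b - 1))"
    by (intro ext) (simp add: dv_def split: nat.split)
  then show ?thesis using dps_shift_v[OF subexp_dv[OF assms(1)] assms(2,3)] by simp
qed

lemma dps_euler_operator:
  assumes "subexp c" "norm u < 1" "norm v < 1"
  shows "dps (\<lambda>n b. of_nat (n + b) * c n b) u v = u * dps (du c) u v + v * dps (dv c) u v"
  using dps_add[OF subexp_mult_n[OF assms(1)] subexp_mult_b[OF assms(1)] assms(2,3)]
    dps_mult_n[OF assms] dps_mult_b[OF assms]
  by (simp add: distrib_right)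

lemma dps_shift_mult_u:
  assumes "subexp c" "norm u < 1" "norm v < 1"
  shows "dps (\<lambda>n b. if n = 0 then 0 else of_nat n * c (n - 1) b) u v
    = u * (u * dps (du c) u v + dps c u v)"
proof -
  have "(\<lambda>n b. if n = 0 then 0 else of_nat n * c (n - 1) b)
      = (\<lambda>n b. if n = 0 then 0 else of_nat (n - 1) * c (n - 1) b + c (n - 1) b)"
    by (intro ext) (simp add: of_nat_diff algebra_simps)
  then show ?thesis
    using dps_shift_u[OF subexp_add[OF subexp_mult_n[OF assms(1)] assms(1)] assms(2,3)]
      dps_add[OF subexp_mult_n[OF assms(1)] assms] dps_mult_n[OF assms] by simp
qed

lemma dps_shift_mult_v:
  assumes "subexp c" "norm u < 1" "norm v < 1"
  shows "dps (\<lambda>n b. if b = 0 then 0 else of_nat b * c n (b - 1)) u v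
    = v * (v * dps (dv c) u v + dps c u v)"
proof -
  have "(\<lambda>n b. if b = 0 then 0 else of_nat b * c n (b - 1))
      = (\<lambda>n b. if b = 0 then 0 else of_nat (b - 1) * c n (b - 1) + c n (b - 1))"
    by (intro ext) (simp add: of_nat_diff algebra_simps)
  then show ?thesis
    using dps_shift_v[OF subexp_add[OF subexp_mult_b[OF assms(1)] assms(1)] assms(2,3)]
      dps_add[OF subexp_mult_b[OF assms(1)] assms] dps_mult_b[OF assms] by simp
qed

lemma dps_indicator_b1:
  assumes "norm u < 1"
  shows "dps (\<lambda>n b. if b = 1 then 1 else 0) u v = v / (1 - u)"
proof -
  have "(\<Sum>b. (if b = 1 then 1 else 0) * u ^ n * v ^ b) = u ^ n * v" for n
  proof -
    have "(\<lambda>b. (if b = 1 then 1 else 0) * u ^ n * v ^ b) = (\<lambda>b. if b = 1 then u ^ n * v ^ b else 0)"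
      by auto
    then show ?thesis using sums_single[of 1 "\<lambda>b. u ^ n * v ^ b"] by (simp add: sums_iff)
  qed
  moreover have "(\<Sum>n. u ^ n * v) = (\<Sum>n. u ^ n) * v"
    using assms by (intro suminf_mult2[symmetric] summable_geometric)
  ultimately show ?thesis
    unfolding dps_def using assms by (simp add: suminf_geometric)
qed

section \<open>Absorption probabilities of the tagged batch\<close>

lemma geometric_weights_sums:
  fixes q :: real
  assumes "0 \<le> q" "q < 1"
  shows "(\<lambda>b. (1 - q) * q ^ b) sums 1"
  using sums_mult[OF geometric_sums[of q], of "1 - q"] assms by simp

lemma geometric_mixture_bounds:
  fixes q :: real
  assumes "0 \<le> q" "q < 1" and g: "\<And>b. 0 \<le> g b \<and> g b \<le> 1"
  shows "summable (\<lambda>b. (1 - q) * q ^ b * g b)"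
    and "0 \<le> (\<Sum>b. (1 - q) * q ^ b * g b)" and "(\<Sum>b. (1 - q) * q ^ b * g b) \<le> 1"
proof -
  note weights = geometric_weights_sums[OF assms(1,2)]
  have le: "(1 - q) * q ^ b * g b \<le> (1 - q) * q ^ b" and nonneg: "0 \<le> (1 - q) * q ^ b * g b" for b
    using g[of b] assms by (auto intro: mult_left_le)
  show summable: "summable (\<lambda>b. (1 - q) * q ^ b * g b)"
    by (rule summable_comparison_test'[OF sums_summable[OF weights]]) (use le nonneg in simp)
  show "0 \<le> (\<Sum>b. (1 - q) * q ^ b * g b)"
    using nonneg summable by (simp add: suminf_nonneg)
  have "(\<Sum>b. (1 - q) * q ^ b * g b) \<le> (\<Sum>b. (1 - q) * q ^ b)"
    by (rule suminf_le[OF le summable sums_summable[OF weights]])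
  then show "(\<Sum>b. (1 - q) * q ^ b * g b) \<le> 1"
    using weights by (simp add: sums_iff)
qed

lemma jump_average_bounds:
  fixes \<rho> X Y Z :: real and m k :: nat
  assumes "0 \<le> \<rho>" "0 < m + k" "0 \<le> X" "X \<le> 1" "0 \<le> Y" "Y \<le> 1" "0 \<le> Z" "Z \<le> 1"
  defines "A \<equiv> \<rho> / (\<rho> + 1) * X + 1 / (\<rho> + 1) * (real k / real (m + k)) * Y
              + 1 / (\<rho> + 1) * (real m / real (m + k)) * Z"
  shows "0 \<le> A" and "A \<le> 1"
proof -
  define \<beta> where "\<beta> = real k / real (m + k)"
  define \<gamma> where "\<gamma> = real m / real (m + k)"
  have pos: "real (m + k) > 0"
    using assms(2) by (simp only: of_nat_0_less_iff)
  have "\<beta> + \<gamma> = (real k + real m) / real (m + k)"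
    by (simp add: \<beta>_def \<gamma>_def add_divide_distrib)
  also have "\<dots> = 1"
    using pos by simp
  finally have "\<beta> + \<gamma> = 1" .
  moreover have "0 \<le> \<beta>" "0 \<le> \<gamma>"
    by (simp_all add: \<beta>_def \<gamma>_def)
  moreover have "\<rho> * X \<le> \<rho>" "\<beta> * Y \<le> \<beta>" "\<gamma> * Z \<le> \<gamma>"
    using assms \<open>0 \<le> \<beta>\<close> \<open>0 \<le> \<gamma>\<close> by (auto intro: mult_left_le)
  ultimately have "0 \<le> \<rho> * X + \<beta> * Y + \<gamma> * Z" "\<rho> * X + \<beta> * Y + \<gamma> * Z \<le> \<rho> + 1"
    using assms by auto
  moreover have "A = (\<rho> * X + \<beta> * Y + \<gamma> * Z) / (\<rho> + 1)"
    unfolding A_def \<beta>_def \<gamma>_def by (simp add: add_divide_distrib ac_simps)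
  ultimately show "0 \<le> A" "A \<le> 1"
    using assms(1) by simp_all
qed

lemma absorb_prob_bounds:
  assumes "0 \<le> \<rho>" "0 \<le> q" "q < 1"
  shows "0 \<le> absorb_prob \<rho> q j m k \<and> absorb_prob \<rho> q j m k \<le> 1"
proof (induction j arbitrary: m k)
  case (Suc j)
  show ?case
  proof (cases "k = 0")
    case False
    note mixture = geometric_mixture_bounds[OF assms(2,3), of "\<lambda>b. absorb_prob \<rho> q j (m + b + 1) k"]
    have "0 \<le> (\<Sum>b. (1 - q) * q ^ b * absorb_prob \<rho> q j (m + b + 1) k)"
      "(\<Sum>b. (1 - q) * q ^ b * absorb_prob \<rho> q j (m + b + 1) k) \<le> 1"
      using mixture(2,3) Suc.IH by auto
    from jump_average_bounds[OF assms(1) _ this Suc.IH[of m "k - 1", THEN conjunct1]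
        Suc.IH[of m "k - 1", THEN conjunct2] Suc.IH[of "m - 1" k, THEN conjunct1]
        Suc.IH[of "m - 1" k, THEN conjunct2]] False
    show ?thesis by (simp del: of_nat_add)
  qed simp
qed simp

lemma absorb_prob_partial_sums_le_1:
  assumes "0 \<le> \<rho>" "0 \<le> q" "q < 1"
  shows "(\<Sum>j<N. absorb_prob \<rho> q j m k) \<le> 1"
proof (induction N arbitrary: m k)
  case (Suc N)
  define T where "T m k = (\<Sum>j<N. absorb_prob \<rho> q j m k)" for m k
  have T: "0 \<le> T m k \<and> T m k \<le> 1" for m k
    using Suc.IH[of m k] absorb_prob_bounds[OF assms] unfolding T_def by (auto intro: sum_nonneg)
  show ?case
  proof (cases "k = 0")
    case True
    then show ?thesis by (simp only: sum.lessThan_Suc_shift) simp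
  next
    case False
    have summable: "summable (\<lambda>b. (1 - q) * q ^ b * absorb_prob \<rho> q j (m + b + 1) k)" for j
      using geometric_mixture_bounds(1)[of q "\<lambda>b. absorb_prob \<rho> q j (m + b + 1) k"]
        absorb_prob_bounds[OF assms] assms by auto
    have "(\<Sum>j<Suc N. absorb_prob \<rho> q j m k) = (\<Sum>j<N. absorb_prob \<rho> q (Suc j) m k)"
      using False by (simp only: sum.lessThan_Suc_shift) simp
    also have "\<dots> = \<rho> / (\<rho> + 1) * (\<Sum>j<N. \<Sum>b. (1 - q) * q ^ b * absorb_prob \<rho> q j (m + b + 1) k)
        + 1 / (\<rho> + 1) * (real k / real (m + k)) * T m (k - 1)
        + 1 / (\<rho> + 1) * (real m / real (m + k)) * T (m - 1) k"
      using False by (simp add: T_def sum.distrib sum_distrib_left)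
    also have "(\<Sum>j<N. \<Sum>b. (1 - q) * q ^ b * absorb_prob \<rho> q j (m + b + 1) k)
        = (\<Sum>b. (1 - q) * q ^ b * T (m + b + 1) k)"
      using suminf_sum[of "{..<N}" "\<lambda>j b. (1 - q) * q ^ b * absorb_prob \<rho> q j (m + b + 1) k"] summable
      by (simp add: T_def sum_distrib_left)
    finally have sum_eq: "(\<Sum>j<Suc N. absorb_prob \<rho> q j m k)
        = \<rho> / (\<rho> + 1) * (\<Sum>b. (1 - q) * q ^ b * T (m + b + 1) k)
          + 1 / (\<rho> + 1) * (real k / real (m + k)) * T m (k - 1)
          + 1 / (\<rho> + 1) * (real m / real (m + k)) * T (m - 1) k" .
    have "0 \<le> (\<Sum>b. (1 - q) * q ^ b * T (m + b + 1) k)" "(\<Sum>b. (1 - q) * q ^ b * T (m + b + 1) k) \<le> 1"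
      using geometric_mixture_bounds(2,3)[of q "\<lambda>b. T (m + b + 1) k"] T assms by auto
    from jump_average_bounds(2)[OF assms(1) _ this T[of m "k - 1", THEN conjunct1]
        T[of m "k - 1", THEN conjunct2] T[of "m - 1" k, THEN conjunct1] T[of "m - 1" k, THEN conjunct2]] False
    show ?thesis unfolding sum_eq by simp
  qed
qed simp

lemma absorb_prob_summable:
  assumes "0 \<le> \<rho>" "0 \<le> q" "q < 1"
  shows "summable (\<lambda>j. absorb_prob \<rho> q j m k)" and "(\<Sum>j. absorb_prob \<rho> q j m k) \<le> 1"
proof -
  show summable: "summable (\<lambda>j. absorb_prob \<rho> q j m k)"
    by (rule summableI_nonneg_bounded[where x = 1])
      (use absorb_prob_bounds[OF assms] absorb_prob_partial_sums_le_1[OF assms] in auto)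
  show "(\<Sum>j. absorb_prob \<rho> q j m k) \<le> 1"
    by (rule suminf_le_const[OF summable]) (use absorb_prob_partial_sums_le_1[OF assms] in auto)
qed

lemma norm_of_real_mult_power_le:
  fixes z :: "'a::real_normed_div_algebra"
  assumes "0 \<le> x" "norm z \<le> 1"
  shows "norm (of_real x * z ^ j) \<le> x"
proof -
  have "norm (of_real x * z ^ j) = x * norm z ^ j"
    using assms by (simp add: norm_mult norm_power)
  also have "\<dots> \<le> x"
    using assms by (simp add: mult_left_le power_le_one)
  finally show ?thesis .
qed

locale ps_queue =
  fixes \<rho> q :: real and s :: complex
  assumes rho_nonneg: "0 \<le> \<rho>" and q_nonneg: "0 \<le> q" and q_less_1: "q < 1"
    and Re_s_nonneg: "0 \<le> Re s"
begin

lemmas absorb_prob_bounds' = absorb_prob_bounds[OF rho_nonneg q_nonneg q_less_1]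
  and absorb_prob_summable' = absorb_prob_summable[OF rho_nonneg q_nonneg q_less_1]

definition holding_transform :: complex where
  "holding_transform = (of_real \<rho> + 1) / (of_real \<rho> + 1 + s)"

lemma holding_transform_bounds:
  shows norm_holding_transform_le_1: "norm holding_transform \<le> 1"
    and holding_transform_mult: "(of_real \<rho> + 1 + s) * holding_transform = of_real \<rho> + 1"
proof -
  have "\<rho> + 1 \<le> Re (of_real \<rho> + 1 + s)"
    using Re_s_nonneg by simp
  also have "\<dots> \<le> norm (of_real \<rho> + 1 + s)"
    by (rule complex_Re_le_cmod)
  finally have denominator: "\<rho> + 1 \<le> norm (of_real \<rho> + 1 + s)" .
  then show "norm holding_transform \<le> 1"
    using rho_nonneg by (simp add: holding_transform_def norm_divide divide_le_eq_1)
  show "(of_real \<rho> + 1 + s) * holding_transform = of_real \<rho> + 1"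
    using denominator rho_nonneg by (auto simp: holding_transform_def)
qed

lemma e_star_sums:
  "(\<lambda>j. of_real (absorb_prob \<rho> q j n b) * holding_transform ^ j) sums e_star \<rho> q s n b"
proof -
  have "summable (\<lambda>j. norm (of_real (absorb_prob \<rho> q j n b) * holding_transform ^ j))"
  proof (rule summable_comparison_test'[OF absorb_prob_summable'(1)[of n b]])
    show "norm (norm (of_real (absorb_prob \<rho> q j n b) * holding_transform ^ j)) \<le> absorb_prob \<rho> q j n b" for j
      using norm_of_real_mult_power_le[OF _ norm_holding_transform_le_1] absorb_prob_bounds' by simp
  qed
  then show ?thesis
    unfolding e_star_def holding_transform_def by (rule summable_sums[OF summable_norm_cancel])
qed

lemma norm_e_star_le_1: "norm (e_star \<rho> q s n b) \<le> 1"
proof -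
  have "norm (e_star \<rho> q s n b) \<le> (\<Sum>j. absorb_prob \<rho> q j n b)"
    using norm_of_real_mult_power_le[OF _ norm_holding_transform_le_1] absorb_prob_bounds'
    by (intro norm_sums_le[OF e_star_sums summable_sums[OF absorb_prob_summable'(1)]]) auto
  also have "\<dots> \<le> 1" by (rule absorb_prob_summable'(2))
  finally show ?thesis .
qed

lemma e_star_empty_batch: "e_star \<rho> q s n 0 = 1"
proof -
  have "(\<lambda>j. of_real (absorb_prob \<rho> q j n 0) * holding_transform ^ j) = (\<lambda>j. if j = 0 then 1 else 0)"
  proof (rule ext)
    show "of_real (absorb_prob \<rho> q j n 0) * holding_transform ^ j = (if j = 0 then 1 else 0)" for j
      by (cases j) simp_all
  qed
  then show ?thesis
    using e_star_sums[of n 0] sums_single[of 0 "\<lambda>_. 1::complex"] by (simp add: sums_iff)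
qed

lemma batch_mixture_sums:
  "(\<lambda>j. of_real (\<Sum>b. (1 - q) * q ^ b * absorb_prob \<rho> q j (m + b + 1) k) * holding_transform ^ j)
    sums (\<Sum>b. of_real ((1 - q) * q ^ b) * e_star \<rho> q s (m + b + 1) k)"
proof -
  define w where "w b = (1 - q) * q ^ b" for b
  define p where "p j b = absorb_prob \<rho> q j (m + b + 1) k" for j b
  define c where "c b j = of_real (w b * p j b) * holding_transform ^ j" for b j
  have w: "0 \<le> w b" for b
    using q_nonneg q_less_1 by (simp add: w_def)
  have p_summable: "summable (\<lambda>j. p j b)" for b
    unfolding p_def by (rule absorb_prob_summable'(1))
  have norm_c: "norm (c b j) \<le> w b * p j b" for b j
    unfolding c_def using w absorb_prob_bounds'
    by (intro norm_of_real_mult_power_le[OF _ norm_holding_transform_le_1]) (simp add: p_def)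
  have row: "summable (\<lambda>j. norm (c b j))" for b
    by (rule summable_comparison_test'[OF summable_mult[OF p_summable]]) (use norm_c in simp)
  have row_bound: "(\<Sum>j. norm (c b j)) \<le> w b" for b
  proof -
    have "(\<Sum>j. norm (c b j)) \<le> (\<Sum>j. w b * p j b)"
      by (rule suminf_le[OF norm_c row summable_mult[OF p_summable]])
    also have "\<dots> = w b * (\<Sum>j. p j b)"
      by (rule suminf_mult[OF p_summable])
    also have "\<dots> \<le> w b"
      using absorb_prob_summable'(2) w unfolding p_def by (rule mult_left_le)
    finally show ?thesis .
  qed
  have rows: "summable (\<lambda>b. \<Sum>j. norm (c b j))"
    by (rule summable_comparison_test'[OF sums_summable[OF geometric_weights_sums[OF q_nonneg q_less_1]]])
      (use row_bound in \<open>simp add: w_def suminf_nonneg row\<close>)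
  have row_sum: "(\<Sum>j. c b j) = of_real (w b) * e_star \<rho> q s (m + b + 1) k" for b
    using sums_mult[OF e_star_sums, of "of_real (w b)"]
    by (simp add: sums_iff c_def p_def mult.assoc)
  have column_sum: "(\<Sum>b. c b j) = of_real (\<Sum>b. w b * p j b) * holding_transform ^ j" for j
  proof -
    have summable: "summable (\<lambda>b. w b * p j b)"
      using geometric_mixture_bounds(1)[OF q_nonneg q_less_1] absorb_prob_bounds'
      by (simp add: w_def p_def)
    have "(\<Sum>b. c b j) = (\<Sum>b. of_real (w b * p j b)) * holding_transform ^ j"
      unfolding c_def by (rule suminf_mult2[symmetric]) (rule summable_of_real[OF summable])
    then show ?thesis
      unfolding suminf_of_real[OF summable] .
  qed
  note swap = suminf_swap_norm_summable[OF row rows]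
  have "(\<lambda>j. \<Sum>b. c b j) sums (\<Sum>b. \<Sum>j. c b j)"
    unfolding swap(2) by (rule summable_sums[OF swap(1)])
  then show ?thesis
    unfolding row_sum column_sum by (simp add: w_def p_def)
qed

lemma e_star_recursion:
  assumes "k \<noteq> 0"
  shows "(of_real \<rho> + 1 + s) * of_nat (m + k) * e_star \<rho> q s m k
    = of_real \<rho> * of_nat (m + k) * (\<Sum>b. of_real ((1 - q) * q ^ b) * e_star \<rho> q s (m + b + 1) k)
      + of_nat k * e_star \<rho> q s m (k - 1) + of_nat m * e_star \<rho> q s (m - 1) k"
proof -
  define z where "z = holding_transform"
  define p where "p = absorb_prob \<rho> q"
  define e where "e = e_star \<rho> q s"
  define X where "X j = (\<Sum>b. (1 - q) * q ^ b * p j (m + b + 1) k)" for j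
  define mixture where "mixture = (\<Sum>b. of_real ((1 - q) * q ^ b) * e (m + b + 1) k)"
  define \<alpha> where "\<alpha> = \<rho> / (\<rho> + 1)"
  define \<beta> where "\<beta> = 1 / (\<rho> + 1) * (real k / real (m + k))"
  define \<gamma> where "\<gamma> = 1 / (\<rho> + 1) * (real m / real (m + k))"
  have p_Suc: "p (Suc j) m k = \<alpha> * X j + \<beta> * p j m (k - 1) + \<gamma> * p j (m - 1) k" for j
    using assms by (simp add: p_def X_def \<alpha>_def \<beta>_def \<gamma>_def)
  have "(\<lambda>j. z * (of_real \<alpha> * (of_real (X j) * z ^ j) + of_real \<beta> * (of_real (p j m (k - 1)) * z ^ j)
        + of_real \<gamma> * (of_real (p j (m - 1) k) * z ^ j)))
      sums (z * (of_real \<alpha> * mixture + of_real \<beta> * e m (k - 1) + of_real \<gamma> * e (m - 1) k))"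
    unfolding z_def p_def e_def X_def mixture_def
    by (intro sums_mult sums_add batch_mixture_sums e_star_sums)
  moreover have "(\<lambda>j. of_real (p (Suc j) m k) * z ^ Suc j)
      = (\<lambda>j. z * (of_real \<alpha> * (of_real (X j) * z ^ j) + of_real \<beta> * (of_real (p j m (k - 1)) * z ^ j)
        + of_real \<gamma> * (of_real (p j (m - 1) k) * z ^ j)))"
    by (intro ext) (simp add: p_Suc algebra_simps)
  ultimately have "(\<lambda>j. of_real (p (Suc j) m k) * z ^ Suc j)
      sums (z * (of_real \<alpha> * mixture + of_real \<beta> * e m (k - 1) + of_real \<gamma> * e (m - 1) k))"
    by simp
  then have "(\<lambda>j. of_real (p j m k) * z ^ j)
      sums (z * (of_real \<alpha> * mixture + of_real \<beta> * e m (k - 1) + of_real \<gamma> * e (m - 1) k))"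
    using assms by (subst (asm) sums_Suc_iff) (simp add: p_def)
  then have e_mk: "e m k = z * (of_real \<alpha> * mixture + of_real \<beta> * e m (k - 1) + of_real \<gamma> * e (m - 1) k)"
    unfolding z_def p_def e_def by (rule sums_unique2[OF e_star_sums])
  have "0 < (\<rho> + 1) * real (m + k)"
    using assms rho_nonneg by (intro mult_pos_pos) auto
  moreover have "\<beta> = real k / ((\<rho> + 1) * real (m + k))" "\<gamma> = real m / ((\<rho> + 1) * real (m + k))"
    by (simp_all add: \<beta>_def \<gamma>_def)
  ultimately have real_coefficients: "(\<rho> + 1) * real (m + k) * \<alpha> = \<rho> * real (m + k)"
    "(\<rho> + 1) * real (m + k) * \<beta> = real k" "(\<rho> + 1) * real (m + k) * \<gamma> = real m"
    using rho_nonneg by (simp_all add: \<alpha>_def)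
  have coefficients: "of_real (\<rho> + 1) * of_nat (m + k) * of_real \<alpha> = of_real \<rho> * (of_nat (m + k) :: complex)"
    "of_real (\<rho> + 1) * of_nat (m + k) * of_real \<beta> = (of_nat k :: complex)"
    "of_real (\<rho> + 1) * of_nat (m + k) * of_real \<gamma> = (of_nat m :: complex)"
    using real_coefficients[THEN arg_cong[where f = complex_of_real]] by simp_all
  have "(of_real \<rho> + 1 + s) * of_nat (m + k) * e m k
      = of_nat (m + k) * ((of_real \<rho> + 1 + s) * z)
        * (of_real \<alpha> * mixture + of_real \<beta> * e m (k - 1) + of_real \<gamma> * e (m - 1) k)"
    by (subst e_mk) algebra
  also have "(of_real \<rho> + 1 + s) * z = of_real (\<rho> + 1)"
    using holding_transform_mult by (simp add: z_def)
  also have "of_nat (m + k) * of_real (\<rho> + 1)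
        * (of_real \<alpha> * mixture + of_real \<beta> * e m (k - 1) + of_real \<gamma> * e (m - 1) k)
      = (of_real (\<rho> + 1) * of_nat (m + k) * of_real \<alpha>) * mixture
        + (of_real (\<rho> + 1) * of_nat (m + k) * of_real \<beta>) * e m (k - 1)
        + (of_real (\<rho> + 1) * of_nat (m + k) * of_real \<gamma>) * e (m - 1) k"
    by (simp only: distrib_left mult_ac)
  finally show ?thesis
    unfolding coefficients e_def mixture_def .
qed

end

section \<open>The coefficients of \<open>E\<close> and \<open>F\<close>\<close>

context ps_queue
begin

text \<open>The series \<^const>\<open>genE\<close> starts at \<open>b = 1\<close>, although \<open>e_star \<rho> q s n 0 = 1\<close>;
  this missing row is where the term \<open>v / (1 - u)\<close> of \<open>L\<close> comes from.\<close>

definition E_coeff :: "nat \<Rightarrow> nat \<Rightarrow> complex" where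
  "E_coeff n b = (if b = 0 then 0 else e_star \<rho> q s n b)"

definition F_coeff :: "nat \<Rightarrow> nat \<Rightarrow> complex" where
  "F_coeff n b = (\<Sum>c. of_real q ^ c * E_coeff (n + c + 1) b)"

lemma norm_E_coeff_le_1: "norm (E_coeff n b) \<le> 1"
  using norm_e_star_le_1 by (simp add: E_coeff_def)

lemma subexp_E_coeff: "subexp E_coeff"
  using norm_E_coeff_le_1 by (rule subexp_bounded)

lemma norm_q_power_E_coeff_le: "norm (of_real q ^ c * E_coeff n b) \<le> q ^ c"
  using mult_left_le[OF norm_E_coeff_le_1, of "q ^ c"] q_nonneg by (simp add: norm_mult norm_power)

lemma q_power_E_coeff_summable: "summable (\<lambda>c. of_real q ^ c * E_coeff (g c) b)"
  by (rule summable_comparison_test'[OF summable_geometric[of q]])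
    (use q_nonneg q_less_1 norm_q_power_E_coeff_le in auto)

lemma norm_F_coeff_le: "norm (F_coeff n b) \<le> 1 / (1 - q)"
proof -
  have "norm (F_coeff n b) \<le> (\<Sum>c. q ^ c)"
    unfolding F_coeff_def using q_nonneg q_less_1 norm_q_power_E_coeff_le
    by (intro norm_suminf_le summable_geometric) auto
  then show ?thesis
    using q_nonneg q_less_1 by (simp add: suminf_geometric)
qed

lemma subexp_F_coeff: "subexp F_coeff"
  using norm_F_coeff_le by (rule subexp_bounded)

lemma F_coeff_diff_Suc: "F_coeff n b - of_real q * F_coeff (Suc n) b = E_coeff (Suc n) b"
proof -
  have "(\<Sum>c. of_real q ^ Suc c * E_coeff (n + Suc c + 1) b) = of_real q * F_coeff (Suc n) b"
    unfolding F_coeff_def using suminf_mult[OF q_power_E_coeff_summable, of "of_real q"]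
    by (simp add: mult.assoc)
  then show ?thesis
    using suminf_split_head[OF q_power_E_coeff_summable[of "\<lambda>c. n + c + 1" b]]
    by (simp add: F_coeff_def)
qed

lemma E_coeff_column_at_q: "(\<Sum>n. of_real q ^ n * E_coeff n b) = E_coeff 0 b + of_real q * F_coeff 0 b"
proof -
  have "(\<Sum>n. of_real q ^ Suc n * E_coeff (Suc n) b) = of_real q * F_coeff 0 b"
    unfolding F_coeff_def using suminf_mult[OF q_power_E_coeff_summable, of "of_real q"]
    by (simp add: mult.assoc)
  then show ?thesis
    using suminf_split_head[OF q_power_E_coeff_summable[of "\<lambda>n. n" b]] by simp
qed

lemma dps_E_coeff_at_q:
  assumes "norm y < 1"
  shows "dps E_coeff (of_real q) y = (\<Sum>b. (E_coeff 0 b + of_real q * F_coeff 0 b) * y ^ b)"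
proof -
  have q: "norm (of_real q :: complex) < 1"
    using q_nonneg q_less_1 by simp
  have "(\<Sum>n. E_coeff n b * y ^ b * of_real q ^ n) = (E_coeff 0 b + of_real q * F_coeff 0 b) * y ^ b" for b
    using suminf_mult2[OF q_power_E_coeff_summable[of "\<lambda>n. n" b], of "y ^ b"] E_coeff_column_at_q[of b]
    by (simp add: ac_simps)
  then show ?thesis
    unfolding dps_transpose[OF subexp_E_coeff q assms] unfolding dps_def by simp
qed

lemma dps_E_coeff_decomp:
  assumes x: "norm x < 1" and y: "norm y < 1"
  shows "dps E_coeff x y = dps E_coeff (of_real q) y + (x - of_real q) * dps F_coeff x y"
proof -
  define r where "r b = E_coeff 0 b + of_real q * F_coeff 0 b" for b
  have "norm (r b) \<le> 1 + q * (1 / (1 - q))" for b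
  proof -
    have "norm (r b) \<le> norm (E_coeff 0 b) + q * norm (F_coeff 0 b)"
      using norm_triangle_ineq[of "E_coeff 0 b" "of_real q * F_coeff 0 b"] q_nonneg
      by (simp add: r_def norm_mult)
    moreover have "q * norm (F_coeff 0 b) \<le> q * (1 / (1 - q))"
      by (rule mult_left_mono[OF norm_F_coeff_le q_nonneg])
    ultimately show ?thesis
      using norm_E_coeff_le_1[of 0 b] by linarith
  qed
  then have row0: "subexp (\<lambda>n b. if n = 0 then r b else 0)"
    by (intro subexp_bounded[where B = "1 + q * (1 / (1 - q))"]) (use q_nonneg q_less_1 in auto)
  have shifted: "(\<lambda>n b. (if n = 0 then 0 else F_coeff (n - 1) b) - of_real q * F_coeff n b)
      = (\<lambda>n b. E_coeff n b - (if n = 0 then r b else 0))"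
  proof (intro ext)
    show "(if n = 0 then 0 else F_coeff (n - 1) b) - of_real q * F_coeff n b
        = E_coeff n b - (if n = 0 then r b else 0)" for n b
      using F_coeff_diff_Suc[of "n - 1" b] by (cases n) (simp_all add: r_def)
  qed
  have "(x - of_real q) * dps F_coeff x y
      = dps (\<lambda>n b. if n = 0 then 0 else F_coeff (n - 1) b) x y - dps (\<lambda>n b. of_real q * F_coeff n b) x y"
    using dps_shift_u[OF subexp_F_coeff x y] dps_cmult[OF subexp_F_coeff x y, of "of_real q"]
    by (simp add: algebra_simps)
  also have "\<dots> = dps (\<lambda>n b. E_coeff n b - (if n = 0 then r b else 0)) x y"
    unfolding shifted[symmetric]
    by (rule dps_diff[OF subexp_shift_u[OF subexp_F_coeff] subexp_cmult[OF subexp_F_coeff] x y, symmetric])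
  also have "\<dots> = dps E_coeff x y - dps (\<lambda>n b. if n = 0 then r b else 0) x y"
    by (rule dps_diff[OF subexp_E_coeff row0 x y])
  also have "dps (\<lambda>n b. if n = 0 then r b else 0) x y = dps E_coeff (of_real q) y"
    unfolding dps_row0 dps_E_coeff_at_q[OF y] r_def ..
  finally show ?thesis by simp
qed

lemma genE_eq_dps:
  assumes "norm x < 1" "norm y < 1"
  shows "genE \<rho> q s x y = dps E_coeff x y"
proof -
  have "(\<Sum>b. e_star \<rho> q s n (Suc b) * x ^ n * y ^ Suc b) = (\<Sum>b. E_coeff n b * x ^ n * y ^ b)" for n
    using suminf_split_head[OF dps_summable(1)[OF subexp_E_coeff assms]] by (simp add: E_coeff_def)
  then show ?thesis
    unfolding genE_def dps_def by simp
qed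

lemma dps_du_E_coeff:
  assumes u: "norm u < 1" and v: "norm v < 1"
  shows "dps (du E_coeff) u v = dps F_coeff u v + (u - of_real q) * dps (du F_coeff) u v"
proof -
  have "((\<lambda>w. dps E_coeff (of_real q) v + (w - of_real q) * dps F_coeff w v)
      has_field_derivative dps F_coeff u v + (u - of_real q) * dps (du F_coeff) u v) (at u)"
    using dps_has_field_derivative_u[OF subexp_F_coeff u v]
    by (auto intro!: derivative_eq_intros)
  then have "deriv (\<lambda>w. dps E_coeff w v) u = dps F_coeff u v + (u - of_real q) * dps (du F_coeff) u v"
    by (rule deriv_eq_on_unit_ball[OF _ u dps_E_coeff_decomp[OF _ v]])
  then show ?thesis
    using DERIV_imp_deriv[OF dps_has_field_derivative_u[OF subexp_E_coeff u v]] by simp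
qed

lemma genF_eq_dps:
  assumes x: "norm x < 1" and y: "norm y < 1"
  shows "genF \<rho> q s x y = dps F_coeff x y"
proof (cases "x = of_real q")
  case True
  have "deriv (\<lambda>w. genE \<rho> q s w y) x = dps (du E_coeff) x y"
    by (rule deriv_eq_on_unit_ball[OF dps_has_field_derivative_u[OF subexp_E_coeff x y] x genE_eq_dps[OF _ y]])
  then show ?thesis
    unfolding genF_def dps_du_E_coeff[OF x y] using True by simp
next
  case False
  then show ?thesis
    using dps_E_coeff_decomp[OF x y] genE_eq_dps[OF x y] genE_eq_dps[OF _ y] q_nonneg q_less_1
    by (simp add: genF_def)
qed

lemma deriv_genF_u:
  assumes "norm u < 1" "norm v < 1"
  shows "deriv (\<lambda>w. genF \<rho> q s w v) u = dps (du F_coeff) u v"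
  by (rule deriv_eq_on_unit_ball[OF dps_has_field_derivative_u[OF subexp_F_coeff assms] assms(1)
        genF_eq_dps[OF _ assms(2)]])

lemma deriv_genF_v:
  assumes "norm u < 1" "norm v < 1"
  shows "deriv (\<lambda>w. genF \<rho> q s u w) v = dps (dv F_coeff) u v"
  by (rule deriv_eq_on_unit_ball[OF dps_has_field_derivative_v[OF subexp_F_coeff assms] assms(2)
        genF_eq_dps[OF assms(1)]])

lemma deriv_genE_q_v:
  assumes "norm v < 1"
  shows "deriv (\<lambda>w. genE \<rho> q s (of_real q) w) v = dps (dv E_coeff) (of_real q) v"
proof -
  have q: "norm (of_real q :: complex) < 1"
    using q_nonneg q_less_1 by simp
  show ?thesis
    by (rule deriv_eq_on_unit_ball[OF dps_has_field_derivative_v[OF subexp_E_coeff q assms] assms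
          genE_eq_dps[OF q]])
qed

lemma dps_dv_E_coeff:
  assumes u: "norm u < 1" and v: "norm v < 1"
  shows "dps (dv E_coeff) u v = dps (dv E_coeff) (of_real q) v + (u - of_real q) * dps (dv F_coeff) u v"
proof -
  have q: "norm (of_real q :: complex) < 1"
    using q_nonneg q_less_1 by simp
  have "((\<lambda>w. dps E_coeff (of_real q) w + (u - of_real q) * dps F_coeff u w)
      has_field_derivative dps (dv E_coeff) (of_real q) v + (u - of_real q) * dps (dv F_coeff) u v) (at v)"
    by (intro DERIV_add DERIV_cmult dps_has_field_derivative_v subexp_E_coeff subexp_F_coeff q u v)
  then have "deriv (\<lambda>w. dps E_coeff u w) v
      = dps (dv E_coeff) (of_real q) v + (u - of_real q) * dps (dv F_coeff) u v"
    by (rule deriv_eq_on_unit_ball[OF _ v dps_E_coeff_decomp[OF u]])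
  then show ?thesis
    using DERIV_imp_deriv[OF dps_has_field_derivative_v[OF subexp_E_coeff u v]] by simp
qed

end

section \<open>The partial differential equation\<close>

context ps_queue
begin

lemma coefficient_identity:
  "(of_real \<rho> + 1 + s) * (of_nat (n + b) * E_coeff n b)
    = of_real \<rho> * (1 - of_real q) * (of_nat (n + b) * F_coeff n b)
      + (if b = 1 then 1 else 0)
      + (if b = 0 then 0 else of_nat b * E_coeff n (b - 1))
      + (if n = 0 then 0 else of_nat n * E_coeff (n - 1) b)"
proof (cases "b = 0")
  case True
  then show ?thesis by (simp add: E_coeff_def F_coeff_def)
next
  case False
  have "(\<Sum>c. of_real ((1 - q) * q ^ c) * e_star \<rho> q s (n + c + 1) b)
      = (\<Sum>c. (1 - of_real q) * (of_real q ^ c * E_coeff (n + c + 1) b))"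
    using False by (simp add: E_coeff_def mult.assoc)
  also have "\<dots> = (1 - of_real q) * F_coeff n b"
    unfolding F_coeff_def by (rule suminf_mult[OF q_power_E_coeff_summable])
  finally have mixture: "(\<Sum>c. of_real ((1 - q) * q ^ c) * e_star \<rho> q s (n + c + 1) b)
      = (1 - of_real q) * F_coeff n b" .
  have v_terms: "(if b = 1 then 1 else 0) + (if b = 0 then 0 else of_nat b * E_coeff n (b - 1))
      = of_nat b * e_star \<rho> q s n (b - 1)"
    using False e_star_empty_batch by (cases "b = 1") (simp_all add: E_coeff_def)
  have u_terms: "(if n = 0 then 0 else of_nat n * E_coeff (n - 1) b) = of_nat n * e_star \<rho> q s (n - 1) b"
    using False by (simp add: E_coeff_def)
  have "(of_real \<rho> + 1 + s) * (of_nat (n + b) * E_coeff n b)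
      = (of_real \<rho> + 1 + s) * of_nat (n + b) * e_star \<rho> q s n b"
    using False by (simp add: E_coeff_def mult.assoc)
  also have "\<dots> = of_real \<rho> * (1 - of_real q) * (of_nat (n + b) * F_coeff n b)
      + of_nat b * e_star \<rho> q s n (b - 1) + of_nat n * e_star \<rho> q s (n - 1) b"
    unfolding e_star_recursion[OF False] mixture by (simp only: mult_ac)
  also have "\<dots> = of_real \<rho> * (1 - of_real q) * (of_nat (n + b) * F_coeff n b)
      + ((if b = 1 then 1 else 0) + (if b = 0 then 0 else of_nat b * E_coeff n (b - 1)))
      + (if n = 0 then 0 else of_nat n * E_coeff (n - 1) b)"
    by (simp only: v_terms u_terms)
  finally show ?thesis
    by (simp only: add.assoc)
qed

lemma E_euler_identity:
  assumes u: "norm u < 1" and v: "norm v < 1"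
  shows "(of_real \<rho> + 1 + s) * (u * dps (du E_coeff) u v + v * dps (dv E_coeff) u v)
    = of_real \<rho> * (1 - of_real q) * (u * dps (du F_coeff) u v + v * dps (dv F_coeff) u v)
      + v / (1 - u) + v * (v * dps (dv E_coeff) u v + dps E_coeff u v)
      + u * (u * dps (du E_coeff) u v + dps E_coeff u v)"
proof -
  define W where "W = (\<lambda>n b. of_real \<rho> * (1 - of_real q) * (of_nat (n + b) * F_coeff n b))"
  define I :: "nat \<Rightarrow> nat \<Rightarrow> complex" where "I = (\<lambda>n b. if b = 1 then 1 else 0)"
  define Sv where "Sv = (\<lambda>n b. if b = 0 then 0 else of_nat b * E_coeff n (b - 1))"
  define Su where "Su = (\<lambda>n b. if n = 0 then 0 else of_nat n * E_coeff (n - 1) b)"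
  have W: "subexp W"
    unfolding W_def by (intro subexp_cmult subexp_euler subexp_F_coeff)
  have I: "subexp I"
    unfolding I_def by (rule subexp_bounded[of _ 1]) simp
  have "subexp (\<lambda>n b. of_nat b * (if b = 0 then 0 else E_coeff n (b - 1)))"
    by (intro subexp_mult_b subexp_shift_v subexp_E_coeff)
  then have Sv: "subexp Sv"
    unfolding Sv_def by (simp add: if_distrib cong: if_cong)
  have "subexp (\<lambda>n b. of_nat n * (if n = 0 then 0 else E_coeff (n - 1) b))"
    by (intro subexp_mult_n subexp_shift_u subexp_E_coeff)
  then have Su: "subexp Su"
    unfolding Su_def by (simp add: if_distrib cong: if_cong)
  have "(\<lambda>n b. (of_real \<rho> + 1 + s) * (of_nat (n + b) * E_coeff n b))
      = (\<lambda>n b. W n b + I n b + Sv n b + Su n b)"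
    unfolding W_def I_def Sv_def Su_def by (intro ext) (rule coefficient_identity)
  then have "(of_real \<rho> + 1 + s) * dps (\<lambda>n b. of_nat (n + b) * E_coeff n b) u v
      = dps W u v + dps I u v + dps Sv u v + dps Su u v"
    unfolding dps_cmult[OF subexp_euler[OF subexp_E_coeff] u v, symmetric]
      dps_add[OF W I u v, symmetric] dps_add[OF subexp_add[OF W I] Sv u v, symmetric]
      dps_add[OF subexp_add[OF subexp_add[OF W I] Sv] Su u v, symmetric]
    by (rule arg_cong[where f = "\<lambda>c. dps c u v"])
  moreover have "dps W u v
      = of_real \<rho> * (1 - of_real q) * (u * dps (du F_coeff) u v + v * dps (dv F_coeff) u v)"
    unfolding W_def dps_cmult[OF subexp_euler[OF subexp_F_coeff] u v]
      dps_euler_operator[OF subexp_F_coeff u v] ..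
  moreover have "dps I u v = v / (1 - u)"
    unfolding I_def by (rule dps_indicator_b1[OF u])
  moreover have "dps Sv u v = v * (v * dps (dv E_coeff) u v + dps E_coeff u v)"
    unfolding Sv_def by (rule dps_shift_mult_v[OF subexp_E_coeff u v])
  moreover have "dps Su u v = u * (u * dps (du E_coeff) u v + dps E_coeff u v)"
    unfolding Su_def by (rule dps_shift_mult_u[OF subexp_E_coeff u v])
  ultimately show ?thesis
    unfolding dps_euler_operator[OF subexp_E_coeff u v] by (simp only:)
qed

end

lemma pde_rearrangement:
  fixes u v Q r s F Fu Fv G Gv W :: complex
  assumes "(r + 1 + s) * (u * (F + (u - Q) * Fu) + v * (Gv + (u - Q) * Fv))
      = r * (1 - Q) * (u * Fu + v * Fv) + W + v * (v * (Gv + (u - Q) * Fv) + (G + (u - Q) * F))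
        + u * (u * (F + (u - Q) * Fu) + (G + (u - Q) * F))"
  shows "u * (u\<^sup>2 - (s + 1 + r + Q) * u + s * Q + r + Q) * Fu
      + v * (r * (1 - Q) - (s + 1 + r - v) * (u - Q)) * Fv
      + (u * (u - s - 1 - r) + (u - Q) * (u + v)) * F
      + (W + (u + v) * G - v * (s + 1 + r - v) * Gv) = 0"
proof -
  have "u * (u\<^sup>2 - (s + 1 + r + Q) * u + s * Q + r + Q) * Fu
      + v * (r * (1 - Q) - (s + 1 + r - v) * (u - Q)) * Fv
      + (u * (u - s - 1 - r) + (u - Q) * (u + v)) * F
      + (W + (u + v) * G - v * (s + 1 + r - v) * Gv)
      = (r * (1 - Q) * (u * Fu + v * Fv) + W + v * (v * (Gv + (u - Q) * Fv) + (G + (u - Q) * F))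
        + u * (u * (F + (u - Q) * Fu) + (G + (u - Q) * F)))
        - (r + 1 + s) * (u * (F + (u - Q) * Fu) + v * (Gv + (u - Q) * Fv))"
    by (simp add: algebra_simps power2_eq_square)
  then show ?thesis
    using assms by simp
qed

theorem mainTheorem4:
  fixes \<rho> q :: real and s u v :: complex
  assumes "\<rho> > 0" and "0 < q" and "q < 1" and "\<rho> + q < 1"
    and "Re s \<ge> 0" and "norm u < 1" and "norm v < 1"
  shows "let P = u\<^sup>2 - (s + 1 + of_real \<rho> + of_real q) * u + s * of_real q + of_real \<rho> + of_real q;
             L = v / (1 - u) + (u + v) * genE \<rho> q s (of_real q) v
                 - v * (s + 1 + of_real \<rho> - v) * deriv (\<lambda>w. genE \<rho> q s (of_real q) w) v
         in u * P * deriv (\<lambda>w. genF \<rho> q s w v) u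
            + v * (of_real \<rho> * (1 - of_real q) - (s + 1 + of_real \<rho> - v) * (u - of_real q))
                * deriv (\<lambda>w. genF \<rho> q s u w) v
            + (u * (u - s - 1 - of_real \<rho>) + (u - of_real q) * (u + v)) * genF \<rho> q s u v
            + L = 0"
proof -
  interpret ps_queue \<rho> q s
    by unfold_locales (use assms in auto)
  note u = \<open>norm u < 1\<close> and v = \<open>norm v < 1\<close>
  have q: "norm (of_real q :: complex) < 1"
    using assms by simp
  note identity = E_euler_identity[OF u v,
      unfolded dps_du_E_coeff[OF u v] dps_dv_E_coeff[OF u v] dps_E_coeff_decomp[OF u v]]
  show ?thesis
    unfolding Let_def deriv_genF_u[OF u v] deriv_genF_v[OF u v] deriv_genE_q_v[OF v]
      genE_eq_dps[OF q v] genF_eq_dps[OF u v]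
    by (rule pde_rearrangement[OF identity])
qed

end
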